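(* Let $\star\in\{T,L,R\}$ and suppose that a pair $(\mathfrak m,\mathfrak m^* )$ of complex-valued functions on the edges of the subgraph $S^\star$ is ICSH and has ICRBV (in $S^\star$). Then $$\int_{\gamma^\star_y}\big(\mathfrak m(z)\hat\psi(z)\,dz+\mathfrak m^*(z)\hat\psi^*(z)\,d\bar z\big)=\int_{\gamma^\star_0}\big(\mathfrak m(z)\hat\psi(z)\,dz+\mathfrak m^*(z)\hat\psi^*(z)\,d\bar z\big)$$ for every $y\in\mathbb Z_{\ge0}$ if $\star=T$, and for every $y\in\mathbb Z_{\le0}$ if $\star\in\{L,R\}$.
   Context: Fix integers $a<0<b$, $C=\{a,\dots,b\}$, $C^*=\{a+\frac12,\dots,b-\frac12\}$. $\tilde V$ has orthonormal basis $(e_\rho)_{\rho\in\{\pm1\}^C}$; for $x'\in C^*$, $\varsigma_{x'}(\rho)$ flips signs of $\rho_x$, $x<x'$; $\psi_{x'}e_\rho=\frac{-\rho_{x'-1/2}+i\rho_{x'+1/2}}{\sqrt2}e_{\varsigma_{x'}(\rho)}$, $\psi^*_{x'}e_\rho=\frac{-i\rho_{x'-1/2}+\rho_{x'+1/2}}{\sqrt2}e_{\varsigma_{x'}(\rho)}$; $\mathrm{CliffGen}$ is their span. With $\beta=\frac12\log(\sqrt2+1)$: $T_h^{1/2}$ diagonal with entries $\exp(\frac\beta2\sum_{x=a}^{b-1}\rho_x\rho_{x+1})$; $e_\tau^\dagger T_ve_\rho=\exp(\beta\sum_x\rho_x\tau_x)\delta_{\tau_a\rho_a}\delta_{\tau_b\rho_b}$;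 $e_\tau^\dagger T^{slit}_ve_\rho=\exp(\beta\sum_x\rho_x\tau_x)\delta_{\tau_a\rho_a}\delta_{\tau_0\rho_0}\delta_{\tau_b\rho_b}$; $T=T_h^{1/2}T_vT_h^{1/2}$, $T^{slit}=T_h^{1/2}T^{slit}_vT_h^{1/2}$. The lattice slit-strip is the multigraph with vertices $C\times\mathbb Z\subset\mathbb C$, nearest-neighbour edges (identified with midpoints), with each edge between $-iy$ and $-i(y+1)$ ($y\ge0$) doubled into a left-side ($0^-$) and right-side ($0^+$) copy; faces adjacent to the slit use the copy on their side. Its subgraphs are $S^T=\{a,\dots,b\}\times\mathbb Z_{\ge0}$, $S^L=\{a,\dots,0\}\times\mathbb Z_{\le0}$, $S^R=\{0,\dots,b\}\times\mathbb Z_{\le0}$ with the corresponding edges of the slit-strip. Left boundary edges: vertical edges on $x=a$ and right-side slit edges; right boundary edges: vertical edges on $x=b$ and left-side slit edges. The fermions $\hat\psi,\hat\psi^*$ are the unique functions from the edges of the slit-strip to $\mathrm{CliffGen}$ with $\hat\psi(x'+iy)=T^{-y}\psi_{x'}T^y$, $\hat\psi^*(x'+iy)=T^{-y}\psi^*_{x'}T^y$, $\hat\psi(x'-iy)=(T^{slit})^y\psi_{x'}(T^{slit})^{-y}$, $\hat\psi^*(x'-iy)=(T^{slit})^y\psi^*_{x'}(T^{slit})^{-y}$ ($y\ge0$) on horizontal edges and satisfying: for edges $z_1,z_2$ adjacent to a common vertex $v$ and face $p$, $\hat\psi(z_1)+\frac{i|v-p|}{v-p}\hat\psi^*(z_1)=\hat\psi(z_2)+\frac{i|v-p|}{v-p}\hat\psi^*(z_2)$;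 $\hat\psi(L)+i\hat\psi^*(L)=0$ and $\hat\psi(R)-i\hat\psi^*(R)=0$ on left/right boundary edges. Contours: $\gamma^T_y=(a+iy,\dots,b+iy)$ ($y\ge0$), $\gamma^L_y=(a+iy,\dots,0+iy)$, $\gamma^R_y=(0+iy,\dots,b+iy)$ ($y\le0$); integrals: $\int(\mathfrak m\hat\psi\,dz+\mathfrak m^*\hat\psi^*\,d\bar z)=\sum_j(\mathfrak m(z_j)\hat\psi(z_j)(w_j-w_{j-1})+\mathfrak m^*(z_j)\hat\psi^*(z_j)\overline{(w_j-w_{j-1})})$ over consecutive vertices $w_{j-1},w_j$ with joining edge $z_j$. ICSH in $S^\star$: for edges $z_1,z_2$ of $S^\star$ adjacent to a common vertex $v$ and face $p$ of $S^\star$, $\mathfrak m(z_1)-\frac{i|v-p|}{v-p}\mathfrak m^*(z_1)=\mathfrak m(z_2)-\frac{i|v-p|}{v-p}\mathfrak m^*(z_2)$. ICRBV in $S^\star$: $\mathfrak m(L)-i\mathfrak m^*(L)=0$ and $\mathfrak m(R)+i\mathfrak m^*(R)=0$ for all left/right boundary edges $L,R$ of $S^\star$ (for $S^L$ the right boundary is the left side of the slit, for $S^R$ the left boundary is the right side of the slit). *)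

theory Defs
  imports Complex_Main
begin

text \<open>Spin configurations rho in {+1,-1}^C, C = {a..b}, encoded as int-valued
functions that are +1 or -1 on C and constantly 1 outside C.  A linear operator
on the space V with orthonormal basis e_rho is encoded by its matrix:
A tau rho = e_tau^dagger A e_rho.\<close>

definition configs :: "int \<Rightarrow> int \<Rightarrow> (int \<Rightarrow> int) set" where
  "configs a b = {\<rho>. \<forall>x. (x \<in> {a..b} \<longrightarrow> \<rho> x \<in> {-1, 1}) \<and> (x \<notin> {a..b} \<longrightarrow> \<rho> x = 1)}"

type_synonym op = "(int \<Rightarrow> int) \<Rightarrow> (int \<Rightarrow> int) \<Rightarrow> complex"

definition mmul :: "int \<Rightarrow> int \<Rightarrow> op \<Rightarrow> op \<Rightarrow> op" where
  "mmul a b A B = (\<lambda>\<tau> \<rho>. \<Sum>\<sigma>\<in>configs a b. A \<tau> \<sigma> * B \<sigma> \<rho>)"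

definition mid :: "int \<Rightarrow> int \<Rightarrow> op" where
  "mid a b = (\<lambda>\<tau> \<rho>. if \<tau> = \<rho> \<and> \<rho> \<in> configs a b then 1 else 0)"

fun mpow :: "int \<Rightarrow> int \<Rightarrow> op \<Rightarrow> nat \<Rightarrow> op" where
  "mpow a b A 0 = mid a b"
| "mpow a b A (Suc n) = mmul a b A (mpow a b A n)"

definition minv :: "int \<Rightarrow> int \<Rightarrow> op \<Rightarrow> op" where
  "minv a b A = (SOME B. (\<forall>\<tau> \<rho>. B \<tau> \<rho> \<noteq> 0 \<longrightarrow> \<tau> \<in> configs a b \<and> \<rho> \<in> configs a b)
                        \<and> mmul a b A B = mid a b \<and> mmul a b B A = mid a b)"

definition osc :: "complex \<Rightarrow> op \<Rightarrow> op" where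
  "osc c A = (\<lambda>\<tau> \<rho>. c * A \<tau> \<rho>)"

definition oadd :: "op \<Rightarrow> op \<Rightarrow> op" where
  "oadd A B = (\<lambda>\<tau> \<rho>. A \<tau> \<rho> + B \<tau> \<rho>)"

definition ozero :: op where
  "ozero = (\<lambda>\<tau> \<rho>. 0)"

text \<open>The dual point x' = k + 1/2 of C* (with a \<le> k < b) is indexed by the integer k.
varsigma_{x'} flips the spins rho_x for x < x', i.e. for a \<le> x \<le> k.\<close>

definition flip :: "int \<Rightarrow> int \<Rightarrow> (int \<Rightarrow> int) \<Rightarrow> (int \<Rightarrow> int)" where
  "flip a k \<rho> = (\<lambda>x. if a \<le> x \<and> x \<le> k then - \<rho> x else \<rho> x)"

definition psi :: "int \<Rightarrow> int \<Rightarrow> int \<Rightarrow> op" where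
  "psi a b k = (\<lambda>\<tau> \<rho>. if \<rho> \<in> configs a b \<and> \<tau> = flip a k \<rho>
      then (- of_int (\<rho> k) + \<i> * of_int (\<rho> (k+1))) / complex_of_real (sqrt 2) else 0)"

definition psis :: "int \<Rightarrow> int \<Rightarrow> int \<Rightarrow> op" where
  "psis a b k = (\<lambda>\<tau> \<rho>. if \<rho> \<in> configs a b \<and> \<tau> = flip a k \<rho>
      then (- \<i> * of_int (\<rho> k) + of_int (\<rho> (k+1))) / complex_of_real (sqrt 2) else 0)"

definition cliffgen :: "int \<Rightarrow> int \<Rightarrow> op set" where
  "cliffgen a b = {A. \<exists>c d. A = (\<lambda>\<tau> \<rho>. \<Sum>k\<in>{a..<b}. c k * psi a b k \<tau> \<rho> + d k * psis a b k \<tau> \<rho>)}"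

definition beta_c :: real where
  "beta_c = ln (sqrt 2 + 1) / 2"

definition Th_half :: "int \<Rightarrow> int \<Rightarrow> op" where
  "Th_half a b = (\<lambda>\<tau> \<rho>. if \<tau> = \<rho> \<and> \<rho> \<in> configs a b
      then complex_of_real (exp (beta_c / 2 * (\<Sum>x\<in>{a..<b}. real_of_int (\<rho> x * \<rho> (x+1))))) else 0)"

definition Tv :: "int \<Rightarrow> int \<Rightarrow> op" where
  "Tv a b = (\<lambda>\<tau> \<rho>. if \<tau> \<in> configs a b \<and> \<rho> \<in> configs a b \<and> \<tau> a = \<rho> a \<and> \<tau> b = \<rho> b
      then complex_of_real (exp (beta_c * (\<Sum>x\<in>{a..b}. real_of_int (\<rho> x * \<tau> x)))) else 0)"

definition Tv_slit :: "int \<Rightarrow> int \<Rightarrow> op" where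
  "Tv_slit a b = (\<lambda>\<tau> \<rho>. if \<tau> \<in> configs a b \<and> \<rho> \<in> configs a b \<and> \<tau> a = \<rho> a \<and> \<tau> 0 = \<rho> 0 \<and> \<tau> b = \<rho> b
      then complex_of_real (exp (beta_c * (\<Sum>x\<in>{a..b}. real_of_int (\<rho> x * \<tau> x)))) else 0)"

definition Tmat :: "int \<Rightarrow> int \<Rightarrow> op" where
  "Tmat a b = mmul a b (Th_half a b) (mmul a b (Tv a b) (Th_half a b))"

definition Tslit :: "int \<Rightarrow> int \<Rightarrow> op" where
  "Tslit a b = mmul a b (Th_half a b) (mmul a b (Tv_slit a b) (Th_half a b))"

text \<open>An edge is identified with its midpoint, together with a tag distinguishing
the two copies (left side 0^-: SL, right side 0^+: SR) of each slit edge; all other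
edges carry the tag Mid.\<close>

datatype side = Mid | SL | SR

type_synonym edge = "complex \<times> side"

definition hedge :: "int \<Rightarrow> int \<Rightarrow> edge" where
  "hedge k y = (Complex (of_int k + 1/2) (of_int y), Mid)"   \<comment> \<open>edge from k+iy to k+1+iy\<close>

definition vedge :: "int \<Rightarrow> int \<Rightarrow> side \<Rightarrow> edge" where
  "vedge x y s = (Complex (of_int x) (of_int y + 1/2), s)"  \<comment> \<open>edge from x+iy to x+i(y+1)\<close>

definition strip_edges :: "int \<Rightarrow> int \<Rightarrow> edge set" where
  "strip_edges a b =
     {hedge k y | k y. a \<le> k \<and> k < b}
   \<union> {vedge x y Mid | x y. a \<le> x \<and> x \<le> b \<and> \<not> (x = 0 \<and> y < 0)}
   \<union> {vedge 0 y s | y s. y < 0 \<and> s \<in> {SL, SR}}"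

text \<open>Faces: the face (k,j) has centre (k+1/2)+i(j+1/2), a \<le> k < b.  Its corner (dx,dy),
dx,dy in {0,1}, is the vertex (k+dx)+i(j+dy); the two edges of the face at this corner are
the horizontal edge and the vertical edge below.  A face adjacent to the slit uses the
copy of the slit edge on its own side.\<close>

definition face_centre :: "int \<Rightarrow> int \<Rightarrow> complex" where
  "face_centre k j = Complex (of_int k + 1/2) (of_int j + 1/2)"

definition corner_vertex :: "int \<Rightarrow> int \<Rightarrow> int \<Rightarrow> int \<Rightarrow> complex" where
  "corner_vertex k j dx dy = Complex (of_int (k + dx)) (of_int (j + dy))"

definition corner_hedge :: "int \<Rightarrow> int \<Rightarrow> int \<Rightarrow> int \<Rightarrow> edge" where
  "corner_hedge k j dx dy = hedge k (j + dy)"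

definition corner_vedge :: "int \<Rightarrow> int \<Rightarrow> int \<Rightarrow> int \<Rightarrow> edge" where
  "corner_vedge k j dx dy = vedge (k + dx) j
      (if k + dx = 0 \<and> j < 0 then (if k < 0 then SL else SR) else Mid)"

definition corner_coef :: "complex \<Rightarrow> complex \<Rightarrow> complex" where
  "corner_coef v p = \<i> * complex_of_real (cmod (v - p)) / (v - p)"

definition strip_faces :: "int \<Rightarrow> int \<Rightarrow> (int \<times> int) set" where
  "strip_faces a b = {(k, j). a \<le> k \<and> k < b}"

definition left_bd :: "int \<Rightarrow> edge \<Rightarrow> bool" where
  "left_bd a e \<longleftrightarrow> (\<exists>y. e = vedge a y Mid) \<or> (\<exists>y. y < 0 \<and> e = vedge 0 y SR)"

definition right_bd :: "int \<Rightarrow> edge \<Rightarrow> bool" where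
  "right_bd b e \<longleftrightarrow> (\<exists>y. e = vedge b y Mid) \<or> (\<exists>y. y < 0 \<and> e = vedge 0 y SL)"

definition is_fermion :: "int \<Rightarrow> int \<Rightarrow> (edge \<Rightarrow> op) \<Rightarrow> (edge \<Rightarrow> op) \<Rightarrow> bool" where
  "is_fermion a b F Fs \<longleftrightarrow>
     (\<forall>e\<in>strip_edges a b. F e \<in> cliffgen a b \<and> Fs e \<in> cliffgen a b)
   \<and> (\<forall>k y. a \<le> k \<and> k < b \<longrightarrow>
        F (hedge k (int y)) = mmul a b (mpow a b (minv a b (Tmat a b)) y)
                                (mmul a b (psi a b k) (mpow a b (Tmat a b) y))
      \<and> Fs (hedge k (int y)) = mmul a b (mpow a b (minv a b (Tmat a b)) y)
                                (mmul a b (psis a b k) (mpow a b (Tmat a b) y))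
      \<and> F (hedge k (- int y)) = mmul a b (mpow a b (Tslit a b) y)
                                (mmul a b (psi a b k) (mpow a b (minv a b (Tslit a b)) y))
      \<and> Fs (hedge k (- int y)) = mmul a b (mpow a b (Tslit a b) y)
                                (mmul a b (psis a b k) (mpow a b (minv a b (Tslit a b)) y)))
   \<and> (\<forall>(k, j)\<in>strip_faces a b. \<forall>dx\<in>{0,1}. \<forall>dy\<in>{0,1}.
        let c = corner_coef (corner_vertex k j dx dy) (face_centre k j);
            h = corner_hedge k j dx dy; v = corner_vedge k j dx dy
        in oadd (F h) (osc c (Fs h)) = oadd (F v) (osc c (Fs v)))
   \<and> (\<forall>e\<in>strip_edges a b. left_bd a e \<longrightarrow> oadd (F e) (osc \<i> (Fs e)) = ozero)
   \<and> (\<forall>e\<in>strip_edges a b. right_bd b e \<longrightarrow> oadd (F e) (osc (- \<i>) (Fs e)) = ozero)"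

datatype region = RT | RL | RR

definition sub_edges :: "int \<Rightarrow> int \<Rightarrow> region \<Rightarrow> edge set" where
  "sub_edges a b r = (case r of
     RT \<Rightarrow> {hedge k y | k y. a \<le> k \<and> k < b \<and> 0 \<le> y}
          \<union> {vedge x y Mid | x y. a \<le> x \<and> x \<le> b \<and> 0 \<le> y}
   | RL \<Rightarrow> {hedge k y | k y. a \<le> k \<and> k < 0 \<and> y \<le> 0}
          \<union> {vedge x y (if x = 0 then SL else Mid) | x y. a \<le> x \<and> x \<le> 0 \<and> y < 0}
   | RR \<Rightarrow> {hedge k y | k y. 0 \<le> k \<and> k < b \<and> y \<le> 0}
          \<union> {vedge x y (if x = 0 then SR else Mid) | x y. 0 \<le> x \<and> x \<le> b \<and> y < 0})"

definition sub_faces :: "int \<Rightarrow> int \<Rightarrow> region \<Rightarrow> (int \<times> int) set" where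
  "sub_faces a b r = (case r of
     RT \<Rightarrow> {(k, j). a \<le> k \<and> k < b \<and> 0 \<le> j}
   | RL \<Rightarrow> {(k, j). a \<le> k \<and> k < 0 \<and> j < 0}
   | RR \<Rightarrow> {(k, j). 0 \<le> k \<and> k < b \<and> j < 0})"

definition ICSH :: "int \<Rightarrow> int \<Rightarrow> region \<Rightarrow> (edge \<Rightarrow> complex) \<Rightarrow> (edge \<Rightarrow> complex) \<Rightarrow> bool" where
  "ICSH a b r m ms \<longleftrightarrow>
     (\<forall>(k, j)\<in>sub_faces a b r. \<forall>dx\<in>{0,1}. \<forall>dy\<in>{0,1}.
        let c = corner_coef (corner_vertex k j dx dy) (face_centre k j);
            h = corner_hedge k j dx dy; v = corner_vedge k j dx dy
        in m h - c * ms h = m v - c * ms v)"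

definition ICRBV :: "int \<Rightarrow> int \<Rightarrow> region \<Rightarrow> (edge \<Rightarrow> complex) \<Rightarrow> (edge \<Rightarrow> complex) \<Rightarrow> bool" where
  "ICRBV a b r m ms \<longleftrightarrow>
     (\<forall>e\<in>sub_edges a b r. left_bd a e \<longrightarrow> m e - \<i> * ms e = 0)
   \<and> (\<forall>e\<in>sub_edges a b r. right_bd b e \<longrightarrow> m e + \<i> * ms e = 0)"

definition contour :: "int \<Rightarrow> int \<Rightarrow> region \<Rightarrow> int \<Rightarrow> complex list" where
  "contour a b r y = map (\<lambda>x. Complex (of_int x) (of_int y))
      (case r of RT \<Rightarrow> [a..b] | RL \<Rightarrow> [a..0] | RR \<Rightarrow> [0..b])"

text \<open>The contours consist of horizontal edges only, so the edge joining consecutive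
vertices w, w' is the (untagged) edge with midpoint (w+w')/2.\<close>

definition cint :: "complex list \<Rightarrow> (edge \<Rightarrow> complex) \<Rightarrow> (edge \<Rightarrow> complex)
                     \<Rightarrow> (edge \<Rightarrow> op) \<Rightarrow> (edge \<Rightarrow> op) \<Rightarrow> op" where
  "cint ws m ms F Fs = (\<lambda>\<tau> \<rho>. \<Sum>j\<in>{1..<length ws}.
      (let w0 = ws ! (j - 1); w1 = ws ! j; z = ((w0 + w1) / 2, Mid)
       in m z * (w1 - w0) * F z \<tau> \<rho> + ms z * cnj (w1 - w0) * Fs z \<tau> \<rho>))"

end

(* At a corner of a face with coefficient c, ICSH says that m - c m* takes
   the same value on the two edges meeting there, and the fermion relations say the same of
   psi + c psi*.  Combining the four corners, the discrete integral of m psi dz + m* psi* dz-bar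
   around every face of the subgraph vanishes, while on boundary edges the integrand itself
   vanishes by ICRBV and the fermion boundary conditions.  Summing over a row of faces the
   interior vertical edges cancel, so consecutive horizontal contours give the same integral. *)

theory Submission
  imports Defs
begin

definition integrand :: "(edge \<Rightarrow> complex) \<Rightarrow> (edge \<Rightarrow> complex) \<Rightarrow> (edge \<Rightarrow> complex)
    \<Rightarrow> (edge \<Rightarrow> complex) \<Rightarrow> edge \<Rightarrow> complex \<Rightarrow> complex" where
  "integrand m ms f g e dz = m e * dz * f e + ms e * cnj dz * g e"

lemma cint_horizontal_row:
  assumes "lo \<le> hi"
  shows "cint (map (\<lambda>x. Complex (of_int x) (of_int y)) [lo..hi]) m ms F Fs \<tau> \<rho>
       = (\<Sum>k\<in>{lo..<hi}. integrand m ms (\<lambda>e. F e \<tau> \<rho>) (\<lambda>e. Fs e \<tau> \<rho>) (hedge k y) 1)"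
proof -
  let ?ws = "map (\<lambda>x. Complex (of_int x) (of_int y)) [lo..hi]"
  have nth: "?ws ! n = Complex (of_int (lo + int n)) (of_int y)" if "n < nat (hi - lo + 1)" for n
    using that by (simp add: nth_upto)
  have term_eq: "(let w0 = ?ws ! (n - 1); w1 = ?ws ! n; z = ((w0 + w1) / 2, Mid)
       in m z * (w1 - w0) * F z \<tau> \<rho> + ms z * cnj (w1 - w0) * Fs z \<tau> \<rho>)
     = integrand m ms (\<lambda>e. F e \<tau> \<rho>) (\<lambda>e. Fs e \<tau> \<rho>) (hedge (lo + int n - 1) y) 1"
    if n: "n \<in> {1..<nat (hi - lo + 1)}" for n
  proof -
    have "lo + int (n - 1) = lo + int n - 1"
      using n by auto
    moreover have "?ws ! (n - 1) = Complex (of_int (lo + int (n - 1))) (of_int y)"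
      using n by (intro nth) auto
    ultimately have w0: "?ws ! (n - 1) = Complex (of_int (lo + int n - 1)) (of_int y)"
      by simp
    have w1: "?ws ! n = Complex (of_int (lo + int n)) (of_int y)"
      using n by (intro nth) auto
    have dz: "Complex (of_int (lo + int n)) (of_int y) - Complex (of_int (lo + int n - 1)) (of_int y) = 1"
      by (simp add: complex_eq_iff)
    have midpoint: "(Complex (of_int (lo + int n - 1)) (of_int y) + Complex (of_int (lo + int n)) (of_int y)) / 2
        = Complex (of_int (lo + int n - 1) + 1/2) (of_int y)"
      by (simp add: complex_eq_iff)
    show ?thesis
      unfolding w0 w1 dz midpoint Let_def integrand_def hedge_def by simp
  qed
  have "cint ?ws m ms F Fs \<tau> \<rho>
      = (\<Sum>n\<in>{1..<nat (hi - lo + 1)}. integrand m ms (\<lambda>e. F e \<tau> \<rho>) (\<lambda>e. Fs e \<tau> \<rho>) (hedge (lo + int n - 1) y) 1)"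
    unfolding cint_def using term_eq by (intro sum.cong) auto
  also have "\<dots> = (\<Sum>k\<in>{lo..<hi}. integrand m ms (\<lambda>e. F e \<tau> \<rho>) (\<lambda>e. Fs e \<tau> \<rho>) (hedge k y) 1)"
    by (rule sum.reindex_bij_witness[where i = "\<lambda>k. nat (k - lo + 1)" and j = "\<lambda>n. lo + int n - 1"]) auto
  finally show ?thesis .
qed

lemma corner_coef_face:
  assumes "dx \<in> {0, 1}" "dy \<in> {0, 1}"
  shows "corner_coef (corner_vertex k j dx dy) (face_centre k j)
     = (if dx = 0 then (if dy = 0 then - (1 + \<i>) else 1 - \<i>) else (if dy = 0 then - 1 + \<i> else 1 + \<i>))
       * (complex_of_real (sqrt 2) / 2)"
proof -
  have diff: "corner_vertex k j dx dy - face_centre k j = Complex (of_int dx - 1/2) (of_int dy - 1/2)"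
    by (simp add: corner_vertex_def face_centre_def complex_eq_iff)
  have "sqrt (2 * (1/2::real)^2) = sqrt ((sqrt 2 / 2)^2)"
    by (simp add: power2_eq_square)
  then have "cmod (Complex (of_int dx - 1/2) (of_int dy - 1/2)) = sqrt 2 / 2"
    using assms by (auto simp: cmod_def)
  moreover have "Complex (of_int dx - 1/2) (of_int dy - 1/2) \<noteq> 0"
    using assms by (auto simp: complex_eq_iff)
  ultimately show ?thesis
    using assms unfolding corner_coef_def diff
    by (subst nonzero_divide_eq_eq) (auto simp: complex_eq_iff)
qed

definition face_relation :: "complex \<Rightarrow> (edge \<Rightarrow> complex) \<Rightarrow> (edge \<Rightarrow> complex) \<Rightarrow> int \<Rightarrow> int \<Rightarrow> bool" where
  "face_relation \<sigma> f g k j \<longleftrightarrow> (\<forall>dx\<in>{0, 1}. \<forall>dy\<in>{0, 1}.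
     let c = \<sigma> * corner_coef (corner_vertex k j dx dy) (face_centre k j);
         h = corner_hedge k j dx dy; v = corner_vedge k j dx dy
     in f h + c * g h = f v + c * g v)"

lemma face_relation_if_ICSH:
  "ICSH a b r m ms \<Longrightarrow> (k, j) \<in> sub_faces a b r \<Longrightarrow> face_relation (- 1) m ms k j"
  unfolding ICSH_def face_relation_def by (force simp: Let_def)

lemma face_relation_if_fermion:
  "is_fermion a b F Fs \<Longrightarrow> (k, j) \<in> strip_faces a b
    \<Longrightarrow> face_relation 1 (\<lambda>e. F e \<tau> \<rho>) (\<lambda>e. Fs e \<tau> \<rho>) k j"
  unfolding is_fermion_def face_relation_def oadd_def osc_def Let_def by (fastforce dest: fun_cong)

(* The relation at the corner with coefficient c is weighted by -c / s = -sqrt 2 c.  Since c^2 = +-i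
   alternates around the face, the cross terms m psi* - m* psi of neighbouring corners cancel. *)
lemma four_corner_identity:
  fixes m ms f g :: "edge \<Rightarrow> complex" and eB eR eT eL :: edge and s c00 c10 c01 c11 :: complex
  assumes "2 * (s * s) = 1"
    and "c00 = - (1 + \<i>) * s" "c10 = (- 1 + \<i>) * s" "c01 = (1 - \<i>) * s" "c11 = (1 + \<i>) * s"
  shows "2 * (integrand m ms f g eB 1 + integrand m ms f g eR \<i>
              - integrand m ms f g eT 1 - integrand m ms f g eL \<i>)
    = (1 + \<i>) * ((m eB - c00 * ms eB) * (f eB + c00 * g eB) - (m eL - c00 * ms eL) * (f eL + c00 * g eL))
    + (1 - \<i>) * ((m eB - c10 * ms eB) * (f eB + c10 * g eB) - (m eR - c10 * ms eR) * (f eR + c10 * g eR))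
    + (- 1 - \<i>) * ((m eT - c11 * ms eT) * (f eT + c11 * g eT) - (m eR - c11 * ms eR) * (f eR + c11 * g eR))
    + (- 1 + \<i>) * ((m eT - c01 * ms eT) * (f eT + c01 * g eT) - (m eL - c01 * ms eL) * (f eL + c01 * g eL))"
proof -
  have "\<i> * \<i> = - 1"
    by simp
  with assms show ?thesis
    unfolding integrand_def complex_cnj_one complex_cnj_i by algebra
qed

lemma face_integral_zero:
  assumes m_rel: "face_relation (- 1) m ms k j" and f_rel: "face_relation 1 f g k j"
  shows "integrand m ms f g (hedge k j) 1 + integrand m ms f g (corner_vedge k j 1 0) \<i>
       - integrand m ms f g (hedge k (j + 1)) 1 - integrand m ms f g (corner_vedge k j 0 0) \<i> = 0"
proof -
  define c where "c dx dy = corner_coef (corner_vertex k j dx dy) (face_centre k j)" for dx dy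
  have vedge_indep: "corner_vedge k j dx dy = corner_vedge k j dx 0" for dx dy
    by (simp add: corner_vedge_def)
  have m_corner: "m (hedge k (j + dy)) - c dx dy * ms (hedge k (j + dy))
      = m (corner_vedge k j dx 0) - c dx dy * ms (corner_vedge k j dx 0)"
    if "dx \<in> {0, 1}" "dy \<in> {0, 1}" for dx dy
    using m_rel that vedge_indep[of dx dy]
    unfolding face_relation_def c_def corner_hedge_def Let_def by fastforce
  have f_corner: "f (hedge k (j + dy)) + c dx dy * g (hedge k (j + dy))
      = f (corner_vedge k j dx 0) + c dx dy * g (corner_vedge k j dx 0)"
    if "dx \<in> {0, 1}" "dy \<in> {0, 1}" for dx dy
    using f_rel that vedge_indep[of dx dy]
    unfolding face_relation_def c_def corner_hedge_def Let_def by fastforce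
  define s where "s = complex_of_real (sqrt 2) / 2"
  have s2: "2 * (s * s) = 1"
    unfolding s_def by (simp add: field_simps flip: of_real_mult)
  have "c 0 0 = - (1 + \<i>) * s" "c 1 0 = (- 1 + \<i>) * s" "c 0 1 = (1 - \<i>) * s" "c 1 1 = (1 + \<i>) * s"
    unfolding c_def s_def by (subst corner_coef_face; simp)+
  note identity = four_corner_identity[OF s2 this, of m ms f g "hedge k j" "corner_vedge k j 1 0"
      "hedge k (j + 1)" "corner_vedge k j 0 0"]
  have "2 * (integrand m ms f g (hedge k j) 1 + integrand m ms f g (corner_vedge k j 1 0) \<i>
       - integrand m ms f g (hedge k (j + 1)) 1 - integrand m ms f g (corner_vedge k j 0 0) \<i>) = 0"
    unfolding identity
    using m_corner[of 0 0] m_corner[of 1 0] m_corner[of 0 1] m_corner[of 1 1]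
      f_corner[of 0 0] f_corner[of 1 0] f_corner[of 0 1] f_corner[of 1 1]
    by simp
  then show ?thesis
    by (subst (asm) mult_eq_0_iff) simp
qed

lemma integrand_left_boundary:
  assumes "f e + \<i> * g e = 0" and "m e - \<i> * ms e = 0"
  shows "integrand m ms f g e \<i> = 0"
proof -
  from assms have "f e = - \<i> * g e" and "m e = \<i> * ms e"
    by (simp_all add: eq_neg_iff_add_eq_0)
  then show ?thesis
    by (simp add: integrand_def algebra_simps)
qed

lemma integrand_right_boundary:
  assumes "f e - \<i> * g e = 0" and "m e + \<i> * ms e = 0"
  shows "integrand m ms f g e \<i> = 0"
proof -
  from assms have "f e = \<i> * g e" and "m e = - \<i> * ms e"
    by (simp_all add: eq_neg_iff_add_eq_0)
  then show ?thesis
    by (simp add: integrand_def algebra_simps)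
qed

lemma fermion_left_boundary:
  "is_fermion a b F Fs \<Longrightarrow> e \<in> strip_edges a b \<Longrightarrow> left_bd a e \<Longrightarrow> F e \<tau> \<rho> + \<i> * Fs e \<tau> \<rho> = 0"
  unfolding is_fermion_def oadd_def osc_def ozero_def by (metis (no_types, lifting))

lemma fermion_right_boundary:
  "is_fermion a b F Fs \<Longrightarrow> e \<in> strip_edges a b \<Longrightarrow> right_bd b e \<Longrightarrow> F e \<tau> \<rho> - \<i> * Fs e \<tau> \<rho> = 0"
  unfolding is_fermion_def oadd_def osc_def ozero_def by (metis (no_types, lifting) diff_conv_add_uminus mult_minus_left)

lemma sum_eq_sum_if_flux_balance:
  fixes B T L R :: "int \<Rightarrow> 'a::ab_group_add"
  assumes "lo < hi"
    and balance: "\<And>k. lo \<le> k \<Longrightarrow> k < hi \<Longrightarrow> B k + R k - T k - L k = 0"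
    and glue: "\<And>k. lo \<le> k \<Longrightarrow> k + 1 < hi \<Longrightarrow> R k = L (k + 1)"
    and "L lo = 0" and "R (hi - 1) = 0"
  shows "(\<Sum>k\<in>{lo..<hi}. B k) = (\<Sum>k\<in>{lo..<hi}. T k)"
proof -
  have "h \<le> hi \<Longrightarrow> (\<Sum>k\<in>{lo..<h}. B k) + R (h - 1) = (\<Sum>k\<in>{lo..<h}. T k) + L lo"
    if "lo + 1 \<le> h" for h
    using that
  proof (induction h rule: int_ge_induct)
    case base
    have "{lo..<lo + 1} = {lo}"
      by auto
    then show ?case
      using balance[of lo] \<open>lo < hi\<close> by (simp add: algebra_simps)
  next
    case (step h)
    have split: "{lo..<h + 1} = insert h {lo..<h}"
      using step.hyps by auto
    have "(\<Sum>k\<in>{lo..<h + 1}. B k) + R (h + 1 - 1) = (\<Sum>k\<in>{lo..<h}. B k) + (B h + R h)"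
      unfolding split by (simp add: algebra_simps)
    also have "B h + R h = R (h - 1) + T h"
      using balance[of h] glue[of "h - 1"] step by (simp add: algebra_simps)
    also have "(\<Sum>k\<in>{lo..<h}. B k) + (R (h - 1) + T h) = (\<Sum>k\<in>{lo..<h}. T k) + L lo + T h"
      using step by (simp add: algebra_simps)
    also have "\<dots> = (\<Sum>k\<in>{lo..<h + 1}. T k) + L lo"
      unfolding split by (simp add: algebra_simps)
    finally show ?case .
  qed
  from this[of hi] assms show ?thesis
    by simp
qed

lemma vedge_eq_iff [simp]: "vedge x y s = vedge x' y' s' \<longleftrightarrow> x = x' \<and> y = y' \<and> s = s'"
  by (auto simp: vedge_def complex_eq_iff)

definition row_start :: "int \<Rightarrow> region \<Rightarrow> int" where
  "row_start a r = (case r of RR \<Rightarrow> 0 | _ \<Rightarrow> a)"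

definition row_end :: "int \<Rightarrow> region \<Rightarrow> int" where
  "row_end b r = (case r of RL \<Rightarrow> 0 | _ \<Rightarrow> b)"

definition face_row :: "region \<Rightarrow> int \<Rightarrow> bool" where
  "face_row r j \<longleftrightarrow> (if r = RT then 0 \<le> j else j < 0)"

lemma contour_eq_row:
  "contour a b r y = map (\<lambda>x. Complex (of_int x) (of_int y)) [row_start a r..row_end b r]"
  by (cases r) (simp_all add: contour_def row_start_def row_end_def)

lemma row_start_less_end: "a < 0 \<Longrightarrow> 0 < b \<Longrightarrow> row_start a r < row_end b r"
  by (cases r) (simp_all add: row_start_def row_end_def)

lemma sub_faces_subset_strip_faces: "a < 0 \<Longrightarrow> 0 < b \<Longrightarrow> sub_faces a b r \<subseteq> strip_faces a b"
  by (cases r) (auto simp: sub_faces_def strip_faces_def)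

lemma face_in_row:
  "a < 0 \<Longrightarrow> 0 < b \<Longrightarrow> face_row r j \<Longrightarrow> row_start a r \<le> k \<Longrightarrow> k < row_end b r
    \<Longrightarrow> (k, j) \<in> sub_faces a b r"
  by (cases r) (auto simp: sub_faces_def face_row_def row_start_def row_end_def)

lemma adjacent_faces_share_vedge:
  "face_row r j \<Longrightarrow> row_start a r \<le> k \<Longrightarrow> k + 1 < row_end b r
    \<Longrightarrow> corner_vedge k j 1 0 = corner_vedge (k + 1) j 0 0"
  by (cases r) (auto simp: corner_vedge_def face_row_def row_start_def row_end_def)

lemma row_left_edge:
  "a < 0 \<Longrightarrow> face_row r j
    \<Longrightarrow> corner_vedge (row_start a r) j 0 0 = (if r = RR then vedge 0 j SR else vedge a j Mid)"
  by (cases r) (auto simp: corner_vedge_def face_row_def row_start_def)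

lemma row_right_edge:
  "0 < b \<Longrightarrow> face_row r j
    \<Longrightarrow> corner_vedge (row_end b r - 1) j 1 0 = (if r = RL then vedge 0 j SL else vedge b j Mid)"
  by (cases r) (auto simp: corner_vedge_def face_row_def row_end_def)

lemma row_left_boundary:
  assumes "a < 0" and "0 < b" and "face_row r j"
  defines "e \<equiv> corner_vedge (row_start a r) j 0 0"
  shows "e \<in> sub_edges a b r" and "e \<in> strip_edges a b" and "left_bd a e"
  using assms row_left_edge[OF assms(1,3)]
  by (cases r; auto simp: face_row_def sub_edges_def strip_edges_def left_bd_def)+

lemma row_right_boundary:
  assumes "a < 0" and "0 < b" and "face_row r j"
  defines "e \<equiv> corner_vedge (row_end b r - 1) j 1 0"
  shows "e \<in> sub_edges a b r" and "e \<in> strip_edges a b" and "right_bd b e"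
  using assms row_right_edge[OF assms(2,3)]
  by (cases r; auto simp: face_row_def sub_edges_def strip_edges_def right_bd_def)+

lemma row_integral_shift:
  fixes \<tau> \<rho> :: "int \<Rightarrow> int"
  assumes ab: "a < 0" "0 < b" and fermion: "is_fermion a b F Fs"
    and holo: "ICSH a b r m ms" and bv: "ICRBV a b r m ms" and j: "face_row r j"
  defines "f \<equiv> \<lambda>e. F e \<tau> \<rho>" and "g \<equiv> \<lambda>e. Fs e \<tau> \<rho>"
  shows "(\<Sum>k\<in>{row_start a r..<row_end b r}. integrand m ms f g (hedge k j) 1)
       = (\<Sum>k\<in>{row_start a r..<row_end b r}. integrand m ms f g (hedge k (j + 1)) 1)"
proof (rule sum_eq_sum_if_flux_balance)
  show "row_start a r < row_end b r"
    using ab by (rule row_start_less_end)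
  show "integrand m ms f g (hedge k j) 1 + integrand m ms f g (corner_vedge k j 1 0) \<i>
      - integrand m ms f g (hedge k (j + 1)) 1 - integrand m ms f g (corner_vedge k j 0 0) \<i> = 0"
    if "row_start a r \<le> k" "k < row_end b r" for k
  proof (rule face_integral_zero)
    have face: "(k, j) \<in> sub_faces a b r"
      using ab j that by (rule face_in_row)
    then show "face_relation (- 1) m ms k j"
      using holo by (intro face_relation_if_ICSH)
    have "(k, j) \<in> strip_faces a b"
      using face sub_faces_subset_strip_faces[OF ab] by blast
    then show "face_relation 1 f g k j"
      unfolding f_def g_def by (rule face_relation_if_fermion[OF fermion])
  qed
  show "integrand m ms f g (corner_vedge k j 1 0) \<i> = integrand m ms f g (corner_vedge (k + 1) j 0 0) \<i>"
    if "row_start a r \<le> k" "k + 1 < row_end b r" for k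
    using adjacent_faces_share_vedge[OF j that] by simp
  show "integrand m ms f g (corner_vedge (row_start a r) j 0 0) \<i> = 0"
  proof (rule integrand_left_boundary)
    note edge = row_left_boundary[OF ab j]
    show "f (corner_vedge (row_start a r) j 0 0) + \<i> * g (corner_vedge (row_start a r) j 0 0) = 0"
      unfolding f_def g_def using edge(2,3) by (rule fermion_left_boundary[OF fermion])
    show "m (corner_vedge (row_start a r) j 0 0) - \<i> * ms (corner_vedge (row_start a r) j 0 0) = 0"
      using bv edge(1,3) unfolding ICRBV_def by blast
  qed
  show "integrand m ms f g (corner_vedge (row_end b r - 1) j 1 0) \<i> = 0"
  proof (rule integrand_right_boundary)
    note edge = row_right_boundary[OF ab j]
    show "f (corner_vedge (row_end b r - 1) j 1 0) - \<i> * g (corner_vedge (row_end b r - 1) j 1 0) = 0"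
      unfolding f_def g_def using edge(2,3) by (rule fermion_right_boundary[OF fermion])
    show "m (corner_vedge (row_end b r - 1) j 1 0) + \<i> * ms (corner_vedge (row_end b r - 1) j 1 0) = 0"
      using bv edge(1,3) unfolding ICRBV_def by blast
  qed
qed

lemma eq_at_zero_if_invariant_across_face_rows:
  fixes R :: "int \<Rightarrow> 'a"
  assumes shift: "\<And>j. face_row r j \<Longrightarrow> R j = R (j + 1)"
    and "r = RT \<longrightarrow> 0 \<le> y" and "r \<noteq> RT \<longrightarrow> y \<le> 0"
  shows "R y = R 0"
proof (cases "r = RT")
  case True
  with assms have "0 \<le> y"
    by simp
  then show ?thesis
  proof (induction y rule: int_ge_induct)
    case (step i)
    with True have "face_row r i"
      by (simp add: face_row_def)
    with step.IH show ?case
      using shift by simp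
  qed simp
next
  case False
  with assms have "y \<le> 0"
    by simp
  then show ?thesis
  proof (induction y rule: int_le_induct)
    case (step i)
    with False have "face_row r (i - 1)"
      by (simp add: face_row_def)
    with step.IH show ?case
      using shift by fastforce
  qed simp
qed

theorem proposition3p20:
  fixes a b y :: int and r :: region
    and m ms :: "edge \<Rightarrow> complex" and F Fs :: "edge \<Rightarrow> op"
  assumes "a < 0" and "0 < b"
    and "is_fermion a b F Fs"
    and "ICSH a b r m ms" and "ICRBV a b r m ms"
    and "r = RT \<longrightarrow> 0 \<le> y" and "r \<noteq> RT \<longrightarrow> y \<le> 0"
  shows "cint (contour a b r y) m ms F Fs = cint (contour a b r 0) m ms F Fs"
proof (intro ext)
  fix \<tau> \<rho>
  define R where "R j = (\<Sum>k\<in>{row_start a r..<row_end b r}.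
      integrand m ms (\<lambda>e. F e \<tau> \<rho>) (\<lambda>e. Fs e \<tau> \<rho>) (hedge k j) 1)" for j
  have "cint (contour a b r j) m ms F Fs \<tau> \<rho> = R j" for j
    unfolding contour_eq_row R_def
    using row_start_less_end[OF assms(1,2), of r] by (intro cint_horizontal_row) simp
  moreover have "R y = R 0"
  proof (rule eq_at_zero_if_invariant_across_face_rows)
    show "R j = R (j + 1)" if "face_row r j" for j
      unfolding R_def using assms(1-5) that by (rule row_integral_shift)
  qed (use assms(6,7) in auto)
  ultimately show "cint (contour a b r y) m ms F Fs \<tau> \<rho> = cint (contour a b r 0) m ms F Fs \<tau> \<rho>"
    by simp
qed

end
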